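(* Let $\mathcal{D}$ be a dataset of $N$ points, $\mathcal{A}$ a learning algorithm producing classifiers, and $[a,b]\subset(0,1)$. For $S\subseteq\mathcal{D}$ let $T(S)$ and $F(S)$ be the true positive rate and false positive rate (on a fixed test set) of the classifier $\mathcal{A}(S)$, and for $p_t\in[a,b]$ let $U_{p_t}(S)=\mathrm{NB}(p_t;S)=T(S)-\frac{p_t}{1-p_t}F(S)$. Let $\mathcal{U}_{\mathrm{cost}}(a,b)=\{U_{p_t}: p_t\in[a,b]\}$. Then $\mathcal{U}_{\mathrm{cost}}(a,b)$ is $(\epsilon,\delta)$-gameable under the aggregate-value favorability $F_{\mathrm{agg}}(\psi(U);P)$, for any $P\subseteq\mathcal{D}$.
   Context: Fix non-negative weights $w_0,\dots,w_{N-1}$ with $\sum_{S\subseteq\mathcal{D}\setminus\{i\}}w_{|S|}=1$; the semivalue of $i$ under utility $U:2^{\mathcal{D}}\to\mathbb{R}$ is $\psi_i(U)=\sum_{S\subseteq\mathcal{D}\setminus\{i\}}w_{|S|}[U(S\cup\{i\})-U(S)]$, and $F_{\mathrm{agg}}(\psi(U);P)=\sum_{i\in P}\psi_i(U)$. A class $\mathcal{U}$ is $(\epsilon,\delta)$-gameable under favorability $F$ if there exists an algorithm that, for any $P\subseteq\mathcal{D}$, returns $U\in\mathcal{U}$ such that with probability at least $1-\delta$, $|F(\psi(U),P)-\sup_{U'\in\mathcal{U}}F(\psi(U'),P)|<\epsilon$, using at most $O(\mathrm{poly}(N)\log(1/\delta)/\epsilon^2)$ utility function evaluations. *)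

theory Defs
  imports "HOL-Probability.Probability"
begin

text \<open>Dataset D = {..<N} (indices of the N points). Semivalue with weights w.\<close>

definition semivalue :: "(nat \<Rightarrow> real) \<Rightarrow> nat set \<Rightarrow> (nat set \<Rightarrow> real) \<Rightarrow> nat \<Rightarrow> real" where
  "semivalue w D U i = (\<Sum>S\<in>Pow (D - {i}). w (card S) * (U (insert i S) - U S))"

definition F_agg :: "(nat \<Rightarrow> real) \<Rightarrow> nat set \<Rightarrow> real" where
  "F_agg \<psi> P = (\<Sum>i\<in>P. \<psi> i)"

definition semivalue_weights :: "nat \<Rightarrow> (nat \<Rightarrow> real) \<Rightarrow> bool" where
  "semivalue_weights N w \<longleftrightarrow> (\<forall>k. 0 \<le> w k) \<and>
     (\<forall>i\<in>{..<N}. (\<Sum>S\<in>Pow ({..<N} - {i}). w (card S)) = 1)"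

definition tpr :: "('x \<times> bool) list \<Rightarrow> ('x \<Rightarrow> bool) \<Rightarrow> real" where
  "tpr test h = real (card {j. j < length test \<and> snd (test ! j) \<and> h (fst (test ! j))})
              / real (card {j. j < length test \<and> snd (test ! j)})"

definition fpr :: "('x \<times> bool) list \<Rightarrow> ('x \<Rightarrow> bool) \<Rightarrow> real" where
  "fpr test h = real (card {j. j < length test \<and> \<not> snd (test ! j) \<and> h (fst (test ! j))})
              / real (card {j. j < length test \<and> \<not> snd (test ! j)})"

definition net_benefit :: "('x \<times> bool) list \<Rightarrow> (nat set \<Rightarrow> 'x \<Rightarrow> bool) \<Rightarrow> real \<Rightarrow> nat set \<Rightarrow> real" where
  "net_benefit test A pt S = tpr test (A S) - pt / (1 - pt) * fpr test (A S)"

definition U_cost :: "('x \<times> bool) list \<Rightarrow> (nat set \<Rightarrow> 'x \<Rightarrow> bool) \<Rightarrow> real \<Rightarrow> real \<Rightarrow> (nat set \<Rightarrow> real) set" where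
  "U_cost test A a b = {net_benefit test A pt | pt. pt \<in> {a..b}}"

section \<open>Query algorithms (randomness = a distribution over query trees)\<close>

datatype ('q, 'a, 'r) qtree = Ret 'r | Ask 'q "'a \<Rightarrow> ('q, 'a, 'r) qtree"

primrec run :: "('q \<Rightarrow> 'a) \<Rightarrow> ('q, 'a, 'r) qtree \<Rightarrow> 'r \<times> nat" where
  "run orc (Ret r) = (r, 0)"
| "run orc (Ask q k) = (let rn = (run orc \<circ> k) (orc q) in (fst rn, Suc (snd rn)))"

definition nb_oracle :: "real \<Rightarrow> real \<Rightarrow> nat \<Rightarrow> ('x \<times> bool) list \<Rightarrow> (nat set \<Rightarrow> 'x \<Rightarrow> bool)
    \<Rightarrow> real \<times> nat set \<Rightarrow> real" where
  "nb_oracle a b N test A q =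
     (if fst q \<in> {a..b} \<and> snd q \<subseteq> {..<N} then net_benefit test A (fst q) (snd q) else 0)"

end

theory Submission
  imports Defs
begin

text \<open>Net benefit is affine in the odds \<open>p / (1 - p)\<close>, so the aggregate value of \<open>U\<^sub>p\<close> is
  \<open>\<alpha> - odds p * \<beta>\<close>, where \<open>\<beta>\<close> is the aggregate semivalue of the false positive rate. The
  supremum over \<open>p \<in> [a, b]\<close> is therefore attained at \<open>a\<close> if \<open>\<beta> \<ge> 0\<close> and at \<open>b\<close> otherwise,
  and either endpoint is within \<open>(odds b - odds a) * \<bar>\<beta>\<bar>\<close> of it; so it suffices to learn
  the sign of \<open>\<beta>\<close> when \<open>\<bar>\<beta>\<bar>\<close> is not small. Up to the factor \<open>|P|\<close>, \<open>\<beta>\<close> is the mean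
  marginal gain in false positive rate when \<open>i\<close> is drawn uniformly from \<open>P\<close> and \<open>S\<close> with
  probability \<open>w |S|\<close>. One such gain costs four utility queries, because
  \<open>U\<^sub>a - U\<^sub>b = (odds b - odds a) * fpr\<close>, and Hoeffding's inequality determines the sign
  from \<open>O(N\<^sup>2 log(1/\<delta>) / \<epsilon>\<^sup>2)\<close> samples.\<close>

definition odds :: "real \<Rightarrow> real" where
  "odds p = p / (1 - p)"

lemma odds_mono:
  assumes "p \<le> q" "q < 1"
  shows "odds p \<le> odds q"
proof -
  have "odds x = 1 / (1 - x) - 1" if "x < 1" for x
    using that unfolding odds_def by (simp add: field_simps)
  moreover have "1 / (1 - p) \<le> 1 / (1 - q)"
    using assms by (intro divide_left_mono) auto
  ultimately show ?thesis
    using assms by simp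
qed

definition marginal_gain :: "(nat set \<Rightarrow> real) \<Rightarrow> nat \<times> nat set \<Rightarrow> real" where
  "marginal_gain U z = U (insert (fst z) (snd z)) - U (snd z)"

lemma semivalue_eq_marginal_gain:
  "semivalue w D U i = (\<Sum>S\<in>Pow (D - {i}). w (card S) * marginal_gain U (i, S))"
  unfolding semivalue_def marginal_gain_def by simp

lemma semivalue_diff_scale:
  "semivalue w D (\<lambda>S. f S - c * g S) = (\<lambda>i. semivalue w D f i - c * semivalue w D g i)"
  unfolding semivalue_def sum_distrib_left sum_subtractf[symmetric]
  by (intro ext sum.cong) (simp_all add: algebra_simps)

lemma F_agg_diff_scale:
  "F_agg (\<lambda>i. \<phi> i - c * \<psi> i) P = F_agg \<phi> P - c * F_agg \<psi> P"
  unfolding F_agg_def sum_distrib_left sum_subtractf ..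

lemma F_agg_semivalue_net_benefit:
  "F_agg (semivalue w D (net_benefit test A p)) P =
   F_agg (semivalue w D (\<lambda>S. tpr test (A S))) P
   - odds p * F_agg (semivalue w D (\<lambda>S. fpr test (A S))) P"
proof -
  have "net_benefit test A p = (\<lambda>S. tpr test (A S) - odds p * fpr test (A S))"
    by (simp add: fun_eq_iff net_benefit_def odds_def)
  then show ?thesis
    by (simp add: semivalue_diff_scale F_agg_diff_scale)
qed

definition endpoint :: "real \<Rightarrow> real \<Rightarrow> real \<Rightarrow> real" where
  "endpoint a b t = (if 0 \<le> t then a else b)"

lemma SUP_U_cost:
  fixes w D P test A
  assumes "a \<le> b" "b < 1"
  defines "\<beta> \<equiv> F_agg (semivalue w D (\<lambda>S. fpr test (A S))) P"
  shows "(SUP U\<in>U_cost test A a b. F_agg (semivalue w D U) P)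
       = F_agg (semivalue w D (net_benefit test A (endpoint a b \<beta>))) P"
proof -
  define \<alpha> where "\<alpha> = F_agg (semivalue w D (\<lambda>S. tpr test (A S))) P"
  have "(\<lambda>U. F_agg (semivalue w D U) P) ` U_cost test A a b = (\<lambda>p. \<alpha> - odds p * \<beta>) ` {a..b}"
    unfolding U_cost_def \<alpha>_def \<beta>_def by (force simp: F_agg_semivalue_net_benefit)
  moreover have "Sup ((\<lambda>p. \<alpha> - odds p * \<beta>) ` {a..b}) = \<alpha> - odds (endpoint a b \<beta>) * \<beta>"
  proof (rule cSup_eq_maximum)
    show "\<alpha> - odds (endpoint a b \<beta>) * \<beta> \<in> (\<lambda>p. \<alpha> - odds p * \<beta>) ` {a..b}"
      using assms by (auto simp: endpoint_def)
    fix v assume "v \<in> (\<lambda>p. \<alpha> - odds p * \<beta>) ` {a..b}"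
    then obtain p where p: "p \<in> {a..b}" "v = \<alpha> - odds p * \<beta>"
      by auto
    have "odds a \<le> odds p" "odds p \<le> odds b"
      using p assms by (auto intro: odds_mono)
    then show "v \<le> \<alpha> - odds (endpoint a b \<beta>) * \<beta>"
      using p by (auto simp: endpoint_def intro: mult_right_mono mult_right_mono_neg)
  qed
  ultimately show ?thesis
    by (simp add: F_agg_semivalue_net_benefit \<alpha>_def \<beta>_def)
qed

lemma endpoint_value_error:
  fixes w D P test A
  assumes "a \<le> b" "b < 1"
  defines "\<beta> \<equiv> F_agg (semivalue w D (\<lambda>S. fpr test (A S))) P"
  shows "\<bar>F_agg (semivalue w D (net_benefit test A (endpoint a b t))) P
          - F_agg (semivalue w D (net_benefit test A (endpoint a b \<beta>))) P\<bar>
         \<le> (if (0 \<le> t) = (0 \<le> \<beta>) then 0 else (odds b - odds a) * \<bar>\<beta>\<bar>)"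
proof -
  have "odds a \<le> odds b"
    using assms by (intro odds_mono) auto
  then have "\<bar>(odds (endpoint a b \<beta>) - odds (endpoint a b t)) * \<beta>\<bar>
             \<le> (if (0 \<le> t) = (0 \<le> \<beta>) then 0 else (odds b - odds a) * \<bar>\<beta>\<bar>)"
    by (auto simp: endpoint_def abs_mult)
  then show ?thesis
    by (simp add: F_agg_semivalue_net_benefit \<beta>_def algebra_simps)
qed

lemma fpr_bounds: "0 \<le> fpr test h" "fpr test h \<le> 1"
proof -
  have "card {j. j < length test \<and> \<not> snd (test ! j) \<and> h (fst (test ! j))}
        \<le> card {j. j < length test \<and> \<not> snd (test ! j)}"
    by (rule card_mono) auto
  then show "0 \<le> fpr test h" "fpr test h \<le> 1"
    unfolding fpr_def by (auto simp: divide_le_eq_1)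
qed

lemma abs_marginal_gain_fpr_le_1: "\<bar>marginal_gain (\<lambda>S. fpr test (A S)) z\<bar> \<le> 1"
  unfolding marginal_gain_def
  using fpr_bounds[of test "A (insert (fst z) (snd z))"] fpr_bounds[of test "A (snd z)"]
  by linarith

lemma abs_semivalue_le:
  assumes w: "semivalue_weights N w" and "i < N" and U: "\<And>z. \<bar>marginal_gain U z\<bar> \<le> c"
  shows "\<bar>semivalue w {..<N} U i\<bar> \<le> c"
proof -
  have "\<bar>semivalue w {..<N} U i\<bar> \<le> (\<Sum>S\<in>Pow ({..<N} - {i}). \<bar>w (card S) * marginal_gain U (i, S)\<bar>)"
    unfolding semivalue_eq_marginal_gain by (rule sum_abs)
  also have "\<dots> \<le> (\<Sum>S\<in>Pow ({..<N} - {i}). w (card S) * c)"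
    using w U by (intro sum_mono) (auto simp: semivalue_weights_def abs_mult intro: mult_left_mono)
  also have "\<dots> = c"
    using w \<open>i < N\<close> by (simp add: semivalue_weights_def sum_distrib_right[symmetric])
  finally show ?thesis .
qed

lemma abs_F_agg_semivalue_le:
  assumes "semivalue_weights N w" "P \<subseteq> {..<N}" "\<And>z. \<bar>marginal_gain U z\<bar> \<le> c"
  shows "\<bar>F_agg (semivalue w {..<N} U) P\<bar> \<le> c * card P"
proof -
  have "\<bar>F_agg (semivalue w {..<N} U) P\<bar> \<le> (\<Sum>i\<in>P. \<bar>semivalue w {..<N} U i\<bar>)"
    unfolding F_agg_def by (rule sum_abs)
  also have "\<dots> \<le> (\<Sum>i\<in>P. c)"
    using assms by (intro sum_mono abs_semivalue_le) auto
  finally show ?thesis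
    by (simp add: mult.commute)
qed

definition semivalue_pmf :: "(nat \<Rightarrow> real) \<Rightarrow> nat \<Rightarrow> nat \<Rightarrow> nat set pmf" where
  "semivalue_pmf w N i = embed_pmf (\<lambda>S. if S \<subseteq> {..<N} - {i} then w (card S) else 0)"

definition contribution_pmf :: "(nat \<Rightarrow> real) \<Rightarrow> nat \<Rightarrow> nat set \<Rightarrow> (nat \<times> nat set) pmf" where
  "contribution_pmf w N P = pmf_of_set P \<bind> (\<lambda>i. map_pmf (Pair i) (semivalue_pmf w N i))"

context
  fixes w :: "nat \<Rightarrow> real" and N :: nat
  assumes weights: "semivalue_weights N w"
begin

lemma pmf_semivalue_pmf:
  assumes "i < N"
  shows "pmf (semivalue_pmf w N i) S = (if S \<subseteq> {..<N} - {i} then w (card S) else 0)"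
  unfolding semivalue_pmf_def
proof (rule pmf_embed_pmf)
  let ?f = "\<lambda>S. if S \<subseteq> {..<N} - {i} then w (card S) else 0"
  show "0 \<le> ?f S" for S
    using weights by (simp add: semivalue_weights_def)
  have "(\<integral>\<^sup>+S. ennreal (?f S) \<partial>count_space UNIV) = (\<Sum>S\<in>Pow ({..<N} - {i}). ennreal (?f S))"
    by (rule nn_integral_count_space') auto
  also have "\<dots> = ennreal (\<Sum>S\<in>Pow ({..<N} - {i}). w (card S))"
    using weights by (subst sum_ennreal) (auto simp: semivalue_weights_def intro!: sum.cong)
  also have "\<dots> = 1"
    using weights assms by (simp add: semivalue_weights_def)
  finally show "(\<integral>\<^sup>+S. ennreal (?f S) \<partial>count_space UNIV) = 1" .
qed

lemma set_semivalue_pmf: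
  assumes "i < N"
  shows "set_pmf (semivalue_pmf w N i) \<subseteq> Pow ({..<N} - {i})"
  using assms by (auto simp: set_pmf_eq pmf_semivalue_pmf split: if_splits)

lemma expectation_semivalue_pmf:
  assumes "i < N"
  shows "measure_pmf.expectation (semivalue_pmf w N i) (\<lambda>S. marginal_gain U (i, S))
       = semivalue w {..<N} U i"
  unfolding semivalue_eq_marginal_gain
  using assms set_semivalue_pmf[OF assms]
  by (subst integral_measure_pmf_real[of "Pow ({..<N} - {i})"])
     (auto simp: pmf_semivalue_pmf mult.commute intro!: sum.cong)

context
  fixes P :: "nat set"
  assumes P: "P \<subseteq> {..<N}" "P \<noteq> {}"
begin

lemma set_contribution_pmf:
  assumes "z \<in> set_pmf (contribution_pmf w N P)"
  shows "fst z \<in> P" "snd z \<subseteq> {..<N} - {fst z}"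
proof -
  obtain i S where "i \<in> P" "S \<in> set_pmf (semivalue_pmf w N i)" "z = (i, S)"
    using assms finite_subset[OF P(1)] P(2) by (auto simp: contribution_pmf_def)
  then show "fst z \<in> P" "snd z \<subseteq> {..<N} - {fst z}"
    using P set_semivalue_pmf[of i] by auto
qed

lemma expectation_contribution_pmf:
  "measure_pmf.expectation (contribution_pmf w N P) (marginal_gain U)
   = F_agg (semivalue w {..<N} U) P / card P"
proof -
  have "finite (set_pmf (semivalue_pmf w N i))" if "i \<in> P" for i
    using that P by (intro finite_subset[OF set_semivalue_pmf]) auto
  moreover have "measure_pmf.expectation (semivalue_pmf w N i) (\<lambda>S. marginal_gain U (i, S))
    = semivalue w {..<N} U i" if "i \<in> P" for i
    using that P by (intro expectation_semivalue_pmf) auto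
  ultimately show ?thesis
    unfolding contribution_pmf_def F_agg_def sum_divide_distrib
    using finite_subset[OF P(1)] P(2)
    by (subst pmf_expectation_bind_pmf_of_set) (auto simp: divide_inverse_commute)
qed

end

end

lemma Pi_pmf_Hoeffding:
  fixes q :: "'a pmf" and g :: "'a \<Rightarrow> real"
  assumes g: "\<And>x. \<bar>g x\<bar> \<le> 1" and m: "0 < m" and "0 \<le> \<eta>"
  shows "measure_pmf.prob (Pi_pmf {..<m} d (\<lambda>_. q))
           {x. real m * \<eta> \<le> \<bar>(\<Sum>j<m. g (x j)) - real m * measure_pmf.expectation q g\<bar>}
         \<le> 2 * exp (- real m * \<eta>\<^sup>2 / 2)"
proof -
  define M where "M = Pi_pmf {..<m} d (\<lambda>_. q)"
  have component: "map_pmf (\<lambda>f. f j) M = q" if "j < m" for j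
    unfolding M_def using that by (subst Pi_pmf_component) auto
  have distr_component: "distr (measure_pmf M) borel (\<lambda>x. g (x j)) = distr (measure_pmf q) borel g"
    if "j < m" for j
  proof -
    have "distr (measure_pmf M) borel (\<lambda>x. g (x j))
        = distr (measure_pmf (map_pmf (\<lambda>f. f j) M)) borel g"
      unfolding map_pmf_rep_eq by (subst distr_distr) (auto simp: o_def)
    then show ?thesis
      using component[OF that] by simp
  qed
  interpret Hoeffding_ineq_iid M "{..<m}" "\<lambda>j x. g (x j)" "\<lambda>x. g (x 0)" "-1" 1
    "measure_pmf.expectation q g"
  proof unfold_locales
    show "prob_space.indep_vars (measure_pmf M) (\<lambda>_. borel) (\<lambda>j x. g (x j)) {..<m}"
      unfolding M_def
      by (intro prob_space.indep_vars_compose2[OF _ indep_vars_Pi_pmf])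
         (auto simp: measure_pmf.prob_space_axioms)
    show "distr (measure_pmf M) borel (\<lambda>x. g (x j)) = distr (measure_pmf M) borel (\<lambda>x. g (x 0))"
      if "j \<in> {..<m}" for j
      using that m by (simp add: distr_component)
    show "AE x in measure_pmf M. g (x 0) \<in> {- 1..1}"
      using g by (auto simp: abs_le_iff)
    have "measure_pmf.expectation M (\<lambda>x. g (x 0)) = measure_pmf.expectation (map_pmf (\<lambda>f. f 0) M) g"
      by simp
    then show "measure_pmf.expectation q g \<equiv> measure_pmf.expectation M (\<lambda>x. g (x 0))"
      using component[OF m] by simp
  qed simp_all
  have "measure_pmf.prob M {x \<in> space M.
          real m * \<eta> \<le> \<bar>(\<Sum>j<m. g (x j)) - real (card {..<m}) * measure_pmf.expectation q g\<bar>}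
     \<le> 2 * exp (-2 * (real m * \<eta>)\<^sup>2 / (real (card {..<m}) * (1 - (-1))\<^sup>2))"
    by (rule Hoeffding_ineq_abs_ge) (use \<open>0 \<le> \<eta>\<close> m in auto)
  also have "-2 * (real m * \<eta>)\<^sup>2 / (real (card {..<m}) * (1 - (-1))\<^sup>2) = - real m * \<eta>\<^sup>2 / 2"
    using m by (simp add: power2_eq_square)
  finally show ?thesis
    unfolding M_def by simp
qed

lemma Pi_pmf_Hoeffding_sample_size:
  fixes q :: "'a pmf" and g :: "'a \<Rightarrow> real"
  assumes "\<And>x. \<bar>g x\<bar> \<le> 1" "0 < m" "0 < \<eta>" "0 < \<delta>" "2 * ln (2 / \<delta>) / \<eta>\<^sup>2 \<le> real m"
  shows "measure_pmf.prob (Pi_pmf {..<m} d (\<lambda>_. q))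
           {x. real m * \<eta> \<le> \<bar>(\<Sum>j<m. g (x j)) - real m * measure_pmf.expectation q g\<bar>} \<le> \<delta>"
proof -
  have "measure_pmf.prob (Pi_pmf {..<m} d (\<lambda>_. q))
           {x. real m * \<eta> \<le> \<bar>(\<Sum>j<m. g (x j)) - real m * measure_pmf.expectation q g\<bar>}
        \<le> 2 * exp (- real m * \<eta>\<^sup>2 / 2)"
    by (rule Pi_pmf_Hoeffding) (use assms in auto)
  also have "\<dots> \<le> 2 * exp (- ln (2 / \<delta>))"
    using assms by (simp add: field_simps)
  also have "\<dots> = \<delta>"
    using \<open>0 < \<delta>\<close> by (simp add: exp_minus)
  finally show ?thesis .
qed

definition ask_gap :: "real \<Rightarrow> real \<Rightarrow> nat \<times> nat set \<Rightarrow> (real \<Rightarrow> (real \<times> nat set, real, 'r) qtree)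
    \<Rightarrow> (real \<times> nat set, real, 'r) qtree" where
  "ask_gap a b z k =
     Ask (a, insert (fst z) (snd z)) (\<lambda>v1. Ask (b, insert (fst z) (snd z)) (\<lambda>v2.
     Ask (a, snd z) (\<lambda>v3. Ask (b, snd z) (\<lambda>v4. k ((v1 - v2) - (v3 - v4))))))"

lemma nb_oracle_gap:
  assumes "a \<le> b" "T \<subseteq> {..<N}"
  shows "nb_oracle a b N test A (a, T) - nb_oracle a b N test A (b, T)
       = (odds b - odds a) * fpr test (A T)"
  using assms by (simp add: nb_oracle_def net_benefit_def odds_def algebra_simps)

lemma run_ask_gap:
  assumes "a \<le> b" "fst z < N" "snd z \<subseteq> {..<N}"
  shows "run (nb_oracle a b N test A) (ask_gap a b z k)
       = apsnd (\<lambda>n. n + 4)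
           (run (nb_oracle a b N test A)
             (k ((odds b - odds a) * marginal_gain (\<lambda>S. fpr test (A S)) z)))"
  using assms
  by (simp add: ask_gap_def Let_def nb_oracle_gap marginal_gain_def right_diff_distrib
      apsnd_def map_prod_def split_beta)

fun sign_test :: "real \<Rightarrow> real \<Rightarrow> (nat \<Rightarrow> nat \<times> nat set) \<Rightarrow> nat \<Rightarrow> real
    \<Rightarrow> (real \<times> nat set, real, real) qtree" where
  "sign_test a b x 0 acc = Ret (endpoint a b acc)"
| "sign_test a b x (Suc n) acc = ask_gap a b (x n) (\<lambda>d. sign_test a b x n (acc + d))"

lemma run_sign_test:
  assumes "a \<le> b" "\<And>j. j < n \<Longrightarrow> fst (x j) < N \<and> snd (x j) \<subseteq> {..<N}"
  shows "run (nb_oracle a b N test A) (sign_test a b x n acc)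
       = (endpoint a b (acc + (odds b - odds a) * (\<Sum>j<n. marginal_gain (\<lambda>S. fpr test (A S)) (x j))),
          4 * n)"
  using assms(2)
proof (induction n arbitrary: acc)
  case 0
  then show ?case by simp
next
  case (Suc n)
  then show ?case
    using assms(1) by (simp add: run_ask_gap algebra_simps)
qed

lemma abs_le_abs_diff_if_sign_differs:
  fixes t u :: real
  assumes "(0 \<le> t) \<noteq> (0 \<le> u)"
  shows "\<bar>u\<bar> \<le> \<bar>t - u\<bar>"
  using assms by linarith

lemma measure_map_pmf_ge_compl:
  assumes "\<And>x. x \<in> set_pmf M \<Longrightarrow> x \<notin> H \<Longrightarrow> f x \<in> E"
  shows "1 - measure_pmf.prob M H \<le> measure_pmf.prob (map_pmf f M) E"
proof -
  have "1 - measure_pmf.prob M H = measure_pmf.prob M (- H \<inter> set_pmf M)"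
    using measure_pmf.prob_compl[of H M] by (simp add: Compl_eq_Diff_UNIV measure_Int_set_pmf)
  also have "\<dots> \<le> measure_pmf.prob M (f -` E)"
    using assms by (intro measure_pmf.finite_measure_mono) auto
  finally show ?thesis
    by simp
qed

lemma measure_pmf_of_set_doubleton_ge:
  assumes "x \<in> E \<or> y \<in> E"
  shows "1 / 2 \<le> measure_pmf.prob (pmf_of_set {x, y}) E"
proof (cases "x = y")
  case True
  then show ?thesis
    using assms by (simp add: pmf_of_set_singleton)
next
  case False
  then have "1 \<le> card ({x, y} \<inter> E)"
    using assms by (auto simp: Suc_le_eq card_gt_0_iff)
  then show ?thesis
    using False by (subst measure_pmf_of_set) auto
qed

definition sample_size :: "real \<Rightarrow> real \<Rightarrow> nat" where
  "sample_size \<eta> \<delta> = nat \<lceil>2 * ln (2 / \<delta>) / \<eta>\<^sup>2\<rceil>"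

lemma sample_size_ge: "2 * ln (2 / \<delta>) / \<eta>\<^sup>2 \<le> real (sample_size \<eta> \<delta>)"
  unfolding sample_size_def by linarith

lemma sample_size_bounds:
  assumes "0 < \<delta>" "\<delta> \<le> 1 / 2" "0 < \<eta>" "\<eta> \<le> 1"
  shows "0 < sample_size \<eta> \<delta>" "real (4 * sample_size \<eta> \<delta>) \<le> 32 * ln (1 / \<delta>) / \<eta>\<^sup>2"
proof -
  define X where "X = 2 * ln (2 / \<delta>) / \<eta>\<^sup>2"
  have ln_2: "ln 2 \<le> ln (1 / \<delta>)"
    using assms by (subst ln_le_cancel_iff) (auto simp: field_simps)
  have "ln (2 / \<delta>) = ln 2 + ln (1 / \<delta>)"
    using assms by (simp add: ln_div)
  then have ln_2_\<delta>: "ln (2 / \<delta>) \<le> 2 * ln (1 / \<delta>)" "1 / 2 \<le> ln (2 / \<delta>)"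
    using ln_2 ln2_ge_two_thirds by linarith+
  have "\<eta>\<^sup>2 \<le> 1"
    using assms by (simp add: power_le_one)
  then have "1 \<le> X"
    using ln_2_\<delta>(2) assms unfolding X_def by (simp add: field_simps)
  then show "0 < sample_size \<eta> \<delta>"
    unfolding sample_size_def X_def[symmetric] by linarith
  have "real (4 * sample_size \<eta> \<delta>) \<le> 8 * X"
    using \<open>1 \<le> X\<close> unfolding sample_size_def X_def[symmetric] by linarith
  also have "\<dots> \<le> 32 * ln (1 / \<delta>) / \<eta>\<^sup>2"
    using ln_2_\<delta>(1) unfolding X_def by (simp add: divide_right_mono)
  finally show "real (4 * sample_size \<eta> \<delta>) \<le> 32 * ln (1 / \<delta>) / \<eta>\<^sup>2" .
qed

text \<open>If \<open>(odds b - odds a) * N < \<epsilon>\<close>, both endpoints are \<open>\<epsilon>\<close>-optimal because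
  \<open>\<bar>\<beta>\<bar> \<le> |P| \<le> N\<close>. For \<open>\<delta> \<ge> 1/2\<close> the query budget \<open>ln (1/\<delta>)\<close> may be arbitrarily small,
  so no queries are made and a fair coin picks the endpoint.\<close>

definition gaming_alg :: "real \<Rightarrow> real \<Rightarrow> (nat \<Rightarrow> nat \<Rightarrow> real) \<Rightarrow> nat \<Rightarrow> nat set \<Rightarrow> real \<Rightarrow> real
    \<Rightarrow> (real \<times> nat set, real, real) qtree pmf" where
  "gaming_alg a b W N P \<epsilon> \<delta> =
     (if P = {} \<or> (odds b - odds a) * N < \<epsilon> then return_pmf (Ret a)
      else if 1 / 2 \<le> \<delta> then pmf_of_set {Ret a, Ret b}
      else let m = sample_size (\<epsilon> / ((odds b - odds a) * N)) \<delta> in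
        map_pmf (\<lambda>x. sign_test a b x m 0) (Pi_pmf {..<m} (0, {}) (\<lambda>_. contribution_pmf (W N) N P)))"

context
  fixes a b :: real and W :: "nat \<Rightarrow> nat \<Rightarrow> real" and N :: nat and P :: "nat set"
    and test :: "('x \<times> bool) list" and A :: "nat set \<Rightarrow> 'x \<Rightarrow> bool" and \<epsilon> \<delta> :: real
  assumes ab: "a \<le> b" "b < 1" and weights: "semivalue_weights N (W N)" and P: "P \<subseteq> {..<N}"
    and \<epsilon>: "0 < \<epsilon>" and \<delta>: "0 < \<delta>" "\<delta> < 1"
begin

abbreviation "fpr_agg \<equiv> F_agg (semivalue (W N) {..<N} (\<lambda>S. fpr test (A S))) P"

abbreviation "near_optimal \<equiv>
  {t. \<bar>F_agg (semivalue (W N) {..<N} (net_benefit test A (fst (run (nb_oracle a b N test A) t)))) P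
       - (SUP U\<in>U_cost test A a b. F_agg (semivalue (W N) {..<N} U) P)\<bar> < \<epsilon>}"

lemma endpoint_not_near_optimal:
  assumes "Ret (endpoint a b t) \<notin> near_optimal"
  shows "(0 \<le> t) \<noteq> (0 \<le> fpr_agg)" "\<epsilon> \<le> (odds b - odds a) * \<bar>fpr_agg\<bar>"
  using assms \<epsilon>
    endpoint_value_error[OF ab, where w = "W N" and D = "{..<N}" and P = P and test = test
      and A = A and t = t]
  by (auto simp: SUP_U_cost[OF ab] split: if_splits)

lemma abs_fpr_agg_le: "\<bar>fpr_agg\<bar> \<le> card P"
  using abs_F_agg_semivalue_le[OF weights P abs_marginal_gain_fpr_le_1] by simp

lemma run_sign_test_on_samples:
  assumes "P \<noteq> {}" "x \<in> set_pmf (Pi_pmf {..<m} d (\<lambda>_. contribution_pmf (W N) N P))"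
  shows "run (nb_oracle a b N test A) (sign_test a b x m acc)
       = (endpoint a b (acc + (odds b - odds a) * (\<Sum>j<m. marginal_gain (\<lambda>S. fpr test (A S)) (x j))),
          4 * m)"
proof (rule run_sign_test[OF ab(1)])
  fix j assume "j < m"
  then have "x j \<in> set_pmf (contribution_pmf (W N) N P)"
    using assms(2) by (auto simp: set_Pi_pmf PiE_dflt_def)
  then show "fst (x j) < N \<and> snd (x j) \<subseteq> {..<N}"
    using set_contribution_pmf[OF weights P \<open>P \<noteq> {}\<close>] P by blast
qed

lemma sign_test_success:
  defines "\<Delta> \<equiv> odds b - odds a"
  assumes "P \<noteq> {}" "\<epsilon> \<le> \<Delta> * N" and m: "0 < m" "2 * ln (2 / \<delta>) / (\<epsilon> / (\<Delta> * N))\<^sup>2 \<le> real m"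
  shows "1 - \<delta> \<le> measure_pmf.prob
           (map_pmf (\<lambda>x. sign_test a b x m 0)
             (Pi_pmf {..<m} (0, {}) (\<lambda>_. contribution_pmf (W N) N P)))
           near_optimal"
proof -
  define M where "M = Pi_pmf {..<m} (0, {}) (\<lambda>_. contribution_pmf (W N) N P)"
  define g where "g = marginal_gain (\<lambda>S. fpr test (A S))"
  define \<mu> where "\<mu> = measure_pmf.expectation (contribution_pmf (W N) N P) g"
  define \<eta> where "\<eta> = \<epsilon> / (\<Delta> * N)"
  define H where "H = {x. real m * \<eta> \<le> \<bar>(\<Sum>j<m. g (x j)) - real m * \<mu>\<bar>}"
  have "0 < \<Delta> * N"
    using assms \<epsilon> by linarith
  then have "0 < \<Delta>" "0 < card P"
    using \<open>P \<noteq> {}\<close> P finite_subset[OF P] by (auto simp: zero_less_mult_iff card_gt_0_iff)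
  have \<mu>: "\<mu> = fpr_agg / card P"
    unfolding \<mu>_def g_def using weights P \<open>P \<noteq> {}\<close> by (rule expectation_contribution_pmf)
  have H: "measure_pmf.prob M H \<le> \<delta>"
    unfolding M_def H_def \<mu>_def
    using m \<delta> \<epsilon> \<open>0 < \<Delta> * N\<close> abs_marginal_gain_fpr_le_1
    by (intro Pi_pmf_Hoeffding_sample_size) (auto simp: g_def \<eta>_def)
  \<comment> \<open>A wrong endpoint means the empirical sum and its mean \<open>m * \<mu>\<close> differ in sign,
    so they are at least \<open>m * \<bar>\<mu>\<bar> \<ge> m * \<eta>\<close> apart.\<close>
  have "sign_test a b x m 0 \<in> near_optimal" if x: "x \<in> set_pmf M" "x \<notin> H" for x
  proof (rule ccontr)
    assume bad: "sign_test a b x m 0 \<notin> near_optimal"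
    have "run (nb_oracle a b N test A) (sign_test a b x m 0)
        = (endpoint a b (\<Delta> * (\<Sum>j<m. g (x j))), 4 * m)"
      using run_sign_test_on_samples[OF \<open>P \<noteq> {}\<close> x(1)[unfolded M_def]] unfolding \<Delta>_def g_def by simp
    then have "Ret (endpoint a b (\<Delta> * (\<Sum>j<m. g (x j)))) \<notin> near_optimal"
      using bad by simp
    note mismatch = endpoint_not_near_optimal[OF this]
    have "real m * \<eta> \<le> real m * \<bar>\<mu>\<bar>"
    proof -
      have "\<epsilon> * card P \<le> \<Delta> * \<bar>fpr_agg\<bar> * card P"
        using mismatch(2) unfolding \<Delta>_def[symmetric] by (simp add: mult_right_mono)
      also have "\<dots> \<le> \<Delta> * \<bar>fpr_agg\<bar> * N"
        using card_mono[OF finite_lessThan P] \<open>0 < \<Delta>\<close> by (intro mult_left_mono) auto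
      finally have "\<epsilon> \<le> \<Delta> * (\<bar>\<mu>\<bar> * N)"
        using \<open>0 < card P\<close> unfolding \<mu> by (simp add: abs_div field_simps)
      then show ?thesis
        using \<open>0 < \<Delta> * N\<close> unfolding \<eta>_def by (intro mult_left_mono) (auto simp: field_simps)
    qed
    also have "real m * \<bar>\<mu>\<bar> \<le> \<bar>(\<Sum>j<m. g (x j)) - real m * \<mu>\<bar>"
    proof -
      have "(0 \<le> (\<Sum>j<m. g (x j))) \<noteq> (0 \<le> real m * \<mu>)"
        using mismatch(1) \<open>0 < \<Delta>\<close> \<open>0 < card P\<close> m(1)
        by (simp add: \<mu> zero_le_mult_iff zero_le_divide_iff)
      then have "\<bar>real m * \<mu>\<bar> \<le> \<bar>(\<Sum>j<m. g (x j)) - real m * \<mu>\<bar>"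
        by (rule abs_le_abs_diff_if_sign_differs)
      then show ?thesis
        by (simp add: abs_mult)
    qed
    finally have "x \<in> H"
      unfolding H_def by simp
    then show False
      using x(2) by simp
  qed
  then have "1 - measure_pmf.prob M H
      \<le> measure_pmf.prob (map_pmf (\<lambda>x. sign_test a b x m 0) M) near_optimal"
    by (rule measure_map_pmf_ge_compl)
  with H show ?thesis
    unfolding M_def by linarith
qed

lemma gaming_alg_queries:
  assumes "t \<in> set_pmf (gaming_alg a b W N P \<epsilon> \<delta>)"
  shows "fst (run (nb_oracle a b N test A) t) \<in> {a..b} \<and>
         real (snd (run (nb_oracle a b N test A) t))
           \<le> 32 * (odds b - odds a)\<^sup>2 * real N ^ 2 * ln (1 / \<delta>) / \<epsilon>\<^sup>2"
proof -
  define \<Delta> where "\<Delta> = odds b - odds a"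
  define m where "m = sample_size (\<epsilon> / (\<Delta> * N)) \<delta>"
  have "0 \<le> ln (1 / \<delta>)"
    using \<delta> by simp
  consider "t = Ret a \<or> t = Ret b"
    | x where "P \<noteq> {}" "\<epsilon> \<le> \<Delta> * N" "\<delta> < 1 / 2" "t = sign_test a b x m 0"
                "x \<in> set_pmf (Pi_pmf {..<m} (0, {}) (\<lambda>_. contribution_pmf (W N) N P))"
    using assms unfolding gaming_alg_def \<Delta>_def[symmetric] m_def[symmetric] Let_def
    by (auto split: if_splits)
  then show ?thesis
  proof cases
    case 1
    then show ?thesis
      using ab \<open>0 \<le> ln (1 / \<delta>)\<close> by auto
  next
    case (2 x)
    have run: "fst (run (nb_oracle a b N test A) t) \<in> {a, b}"
      "snd (run (nb_oracle a b N test A) t) = 4 * m"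
      using run_sign_test_on_samples[OF 2(1,5)] 2(4) by (simp_all add: endpoint_def)
    have "0 < \<Delta> * N"
      using 2 \<epsilon> by linarith
    then have "real (4 * m) \<le> 32 * ln (1 / \<delta>) / (\<epsilon> / (\<Delta> * N))\<^sup>2"
      unfolding m_def using 2 \<epsilon> \<delta> by (intro sample_size_bounds) auto
    also have "\<dots> = 32 * \<Delta>\<^sup>2 * real N ^ 2 * ln (1 / \<delta>) / \<epsilon>\<^sup>2"
      by (simp add: power_divide power_mult_distrib)
    finally show ?thesis
      using run ab unfolding \<Delta>_def by auto
  qed
qed

lemma gaming_alg_success: "1 - \<delta> \<le> measure_pmf.prob (gaming_alg a b W N P \<epsilon> \<delta>) near_optimal"
proof -
  define \<Delta> where "\<Delta> = odds b - odds a"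
  have "0 \<le> \<Delta>"
    unfolding \<Delta>_def using ab odds_mono by simp
  consider "P = {} \<or> \<Delta> * N < \<epsilon>" | "P \<noteq> {}" "\<epsilon> \<le> \<Delta> * N" "1 / 2 \<le> \<delta>"
    | "P \<noteq> {}" "\<epsilon> \<le> \<Delta> * N" "\<delta> < 1 / 2"
    by linarith
  then show ?thesis
  proof cases
    case 1
    have "\<Delta> * \<bar>fpr_agg\<bar> \<le> \<Delta> * card P"
      using abs_fpr_agg_le \<open>0 \<le> \<Delta>\<close> by (rule mult_left_mono)
    also have "\<dots> < \<epsilon>"
    proof (cases "P = {}")
      case True
      then show ?thesis
        using \<epsilon> by simp
    next
      case False
      have "\<Delta> * card P \<le> \<Delta> * N"
        using card_mono[OF finite_lessThan P] \<open>0 \<le> \<Delta>\<close> by (intro mult_left_mono) auto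
      then show ?thesis
        using 1 False by linarith
    qed
    finally have "Ret (endpoint a b 0) \<in> near_optimal"
      using endpoint_not_near_optimal(2) unfolding \<Delta>_def by force
    then show ?thesis
      using 1 \<delta> unfolding gaming_alg_def \<Delta>_def[symmetric] by (simp add: endpoint_def)
  next
    case 2
    have "Ret (endpoint a b fpr_agg) \<in> near_optimal"
      using endpoint_not_near_optimal(1) by blast
    then have "1 / 2 \<le> measure_pmf.prob (pmf_of_set {Ret a, Ret b}) near_optimal"
      by (intro measure_pmf_of_set_doubleton_ge) (auto simp: endpoint_def split: if_splits)
    then show ?thesis
      using 2 unfolding gaming_alg_def \<Delta>_def[symmetric] by simp
  next
    case 3
    define m where "m = sample_size (\<epsilon> / (\<Delta> * N)) \<delta>"
    have "0 < m"
      unfolding m_def using 3 \<epsilon> \<delta> by (intro sample_size_bounds) auto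
    moreover have "2 * ln (2 / \<delta>) / (\<epsilon> / (\<Delta> * N))\<^sup>2 \<le> real m"
      unfolding m_def by (rule sample_size_ge)
    ultimately have "1 - \<delta> \<le> measure_pmf.prob
        (map_pmf (\<lambda>x. sign_test a b x m 0) (Pi_pmf {..<m} (0, {}) (\<lambda>_. contribution_pmf (W N) N P)))
        near_optimal"
      using 3 unfolding \<Delta>_def by (intro sign_test_success) auto
    then show ?thesis
      using 3 unfolding gaming_alg_def \<Delta>_def[symmetric] m_def[symmetric] Let_def by simp
  qed
qed

end

theorem proposition3:
  fixes a b :: real and W :: "nat \<Rightarrow> nat \<Rightarrow> real"
  assumes "0 < a" and "a \<le> b" and "b < 1"
    and "\<And>N. semivalue_weights N (W N)"
  shows "\<exists>(Alg :: nat \<Rightarrow> nat set \<Rightarrow> real \<Rightarrow> real \<Rightarrow> (real \<times> nat set, real, real) qtree pmf)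
            (C :: real) (k :: nat).
     \<forall>N P \<epsilon> \<delta> (test :: ('x \<times> bool) list) (A :: nat set \<Rightarrow> 'x \<Rightarrow> bool).
       P \<subseteq> {..<N} \<longrightarrow> 0 < \<epsilon> \<longrightarrow> 0 < \<delta> \<longrightarrow> \<delta> < 1 \<longrightarrow>
       (\<forall>t\<in>set_pmf (Alg N P \<epsilon> \<delta>).
          fst (run (nb_oracle a b N test A) t) \<in> {a..b} \<and>
          real (snd (run (nb_oracle a b N test A) t)) \<le> C * real N ^ k * ln (1 / \<delta>) / \<epsilon>\<^sup>2)
       \<and> measure_pmf.prob (Alg N P \<epsilon> \<delta>)
           {t. \<bar>F_agg (semivalue (W N) {..<N}
                   (net_benefit test A (fst (run (nb_oracle a b N test A) t)))) P
                - (SUP U\<in>U_cost test A a b. F_agg (semivalue (W N) {..<N} U) P)\<bar> < \<epsilon>}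
         \<ge> 1 - \<delta>"
proof (intro exI[of _ "gaming_alg a b W"] exI[of _ "32 * (odds b - odds a)\<^sup>2"] exI[of _ 2]
    allI impI, goal_cases)
  case (1 N P \<epsilon> \<delta> test A)
  note setting = assms(2,3) assms(4)[of N] 1
  show ?case
    using gaming_alg_queries[where W = W, OF setting] gaming_alg_success[where W = W, OF setting]
    by blast
qed

end
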